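(* Let $(Y_t,X_t)_{t\ge1}$ be a hidden Markov model with finite state space $S$, $T\ge1$, and let $k$ satisfy $T\ge k>1$. Then for all paths $s^T\in S^T$, $$\bar R_k(s^T)=\bar R_\infty(s^T)+\bar R_{k-1}(s^T),$$ and for every $x^T\in\mathcal X^T$ (with $p(x^T)>0$) and all $s^T\in S^T$, $$\bar R_k(s^T|x^T)=\bar R_\infty(s^T|x^T)+\bar R_{k-1}(s^T|x^T).$$
   Context: Hidden Markov model: $Y$ is a Markov chain on finite $S$; given $Y$, the $X_t$ are conditionally independent and $X_t$ has density $f_s$ when $Y_t=s$. Prior path law $p(s^T)=\mathbf P(Y^T=s^T)$, posterior path law $p(s^T|x^T)=\mathbf P(Y^T=s^T|X^T=x^T)$; for $1\le a\le b\le T$, $p(s_a^b)=\mathbf P(Y_a^b=s_a^b)$ and $p(s_a^b|x^T)=\mathbf P(Y_a^b=s_a^b|X^T=x^T)$, where $s_a^b=(s_a,\dots,s_b)$. For a positive integer $k$: $\bar R_k(s^T)=-\frac1T\ln\prod_{j=1-k}^{T-1}p(s_{(j+1)\vee1}^{(j+k)\wedge T})$ and $\bar R_k(s^T|x^T)=-\frac1T\ln\prod_{j=1-k}^{T-1}p(s_{(j+1)\vee1}^{(j+k)\wedge T}|x^T)$; also $\bar R_\infty(s^T)=-\frac1T\ln p(s^T)$ and $\bar R_\infty(s^T|x^T)=-\frac1T\ln p(s^T|x^T)$. Here $\vee=\max$, $\wedge=\min$, $\ln0=-\infty$. *)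

theory Defs
  imports "HOL-Analysis.Analysis"
begin

definition eln :: "real \<Rightarrow> ereal" where
  "eln x = (if x = 0 then -\<infinity> else ereal (ln x))"

definition paths :: "nat \<Rightarrow> (nat \<Rightarrow> 's) set" where
  "paths T = Pi\<^sub>E {1..T} (\<lambda>_. UNIV)"

definition path_prob :: "('s \<Rightarrow> real) \<Rightarrow> ('s \<Rightarrow> 's \<Rightarrow> real) \<Rightarrow> nat \<Rightarrow> (nat \<Rightarrow> 's) \<Rightarrow> real" where
  "path_prob init P T s = init (s 1) * (\<Prod>t\<in>{2..T}. P (s (t - 1)) (s t))"

definition lik :: "('s \<Rightarrow> 'x \<Rightarrow> real) \<Rightarrow> nat \<Rightarrow> (nat \<Rightarrow> 'x) \<Rightarrow> (nat \<Rightarrow> 's) \<Rightarrow> real" where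
  "lik f T x s = (\<Prod>t\<in>{1..T}. f (s t) (x t))"

definition agree :: "nat \<Rightarrow> nat \<Rightarrow> nat \<Rightarrow> (nat \<Rightarrow> 's) \<Rightarrow> (nat \<Rightarrow> 's) set" where
  "agree T a b s = {u \<in> paths T. \<forall>i\<in>{a..b}. u i = s i}"

definition prior_marg :: "('s \<Rightarrow> real) \<Rightarrow> ('s \<Rightarrow> 's \<Rightarrow> real) \<Rightarrow> nat \<Rightarrow> (nat \<Rightarrow> 's) \<Rightarrow> nat \<Rightarrow> nat \<Rightarrow> real" where
  "prior_marg init P T s a b = (\<Sum>u\<in>agree T a b s. path_prob init P T u)"

definition obs_density :: "('s::finite \<Rightarrow> real) \<Rightarrow> ('s \<Rightarrow> 's \<Rightarrow> real) \<Rightarrow> ('s \<Rightarrow> 'x \<Rightarrow> real) \<Rightarrow> nat \<Rightarrow> (nat \<Rightarrow> 'x) \<Rightarrow> real" where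
  "obs_density init P f T x = (\<Sum>u\<in>paths T. path_prob init P T u * lik f T x u)"

definition post_marg :: "('s::finite \<Rightarrow> real) \<Rightarrow> ('s \<Rightarrow> 's \<Rightarrow> real) \<Rightarrow> ('s \<Rightarrow> 'x \<Rightarrow> real) \<Rightarrow> nat \<Rightarrow> (nat \<Rightarrow> 'x) \<Rightarrow> (nat \<Rightarrow> 's) \<Rightarrow> nat \<Rightarrow> nat \<Rightarrow> real" where
  "post_marg init P f T x s a b =
     (\<Sum>u\<in>agree T a b s. path_prob init P T u * lik f T x u) / obs_density init P f T x"

text \<open>R_k-bar for a block-probability function q a b = p(s_a^b) (or p(s_a^b|x^T)):
  -(1/T) ln prod_{j=1-k}^{T-1} q((j+1) max 1, (j+k) min T).\<close>
definition Rbar :: "nat \<Rightarrow> nat \<Rightarrow> (nat \<Rightarrow> nat \<Rightarrow> real) \<Rightarrow> ereal" where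
  "Rbar T k q = ereal (- 1 / real T) *
     eln (\<Prod>j\<in>{1 - int k .. int T - 1}. q (nat (max (j + 1) 1)) (nat (min (j + int k) (int T))))"

definition Rbar_inf :: "nat \<Rightarrow> (nat \<Rightarrow> nat \<Rightarrow> real) \<Rightarrow> ereal" where
  "Rbar_inf T q = ereal (- 1 / real T) * eln (q 1 T)"

end

theory Submission
  imports Defs
begin

text \<open>Both the prior and the posterior block probabilities are (up to a constant) sums
  \<open>q a b\<close> of a Markov path weight over the paths that agree with \<open>s\<close> on \<open>a..b\<close>.
  Splicing two paths at a common state shows the exchange identity
  \<open>q a b * q c d = q a d * q c b\<close> for overlapping blocks \<open>a \<le> c \<le> b \<le> d\<close>.
  Going from windows of length \<open>k - 1\<close> to windows of length \<open>k\<close>, the exchange identity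
  telescopes the extra factors into the single whole-path factor \<open>q 1 T\<close>; taking
  \<open>-(1/T) ln\<close> turns this product identity into the claimed sum.\<close>

definition path_weight ::
    "('s \<Rightarrow> real) \<Rightarrow> ('s \<Rightarrow> 's \<Rightarrow> real) \<Rightarrow> ('s \<Rightarrow> 'x \<Rightarrow> real) \<Rightarrow> nat \<Rightarrow> (nat \<Rightarrow> 'x) \<Rightarrow> (nat \<Rightarrow> 's) \<Rightarrow> real" where
  "path_weight init P f T x u = path_prob init P T u * lik f T x u"

definition block_weight ::
    "('s \<Rightarrow> real) \<Rightarrow> ('s \<Rightarrow> 's \<Rightarrow> real) \<Rightarrow> ('s \<Rightarrow> 'x \<Rightarrow> real) \<Rightarrow> nat \<Rightarrow> (nat \<Rightarrow> 'x) \<Rightarrow> (nat \<Rightarrow> 's) \<Rightarrow> nat \<Rightarrow> nat \<Rightarrow> real" where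
  "block_weight init P f T x s a b = (\<Sum>u\<in>agree T a b s. path_weight init P f T x u)"

definition prefix_weight ::
    "('s \<Rightarrow> real) \<Rightarrow> ('s \<Rightarrow> 's \<Rightarrow> real) \<Rightarrow> ('s \<Rightarrow> 'x \<Rightarrow> real) \<Rightarrow> (nat \<Rightarrow> 'x) \<Rightarrow> nat \<Rightarrow> (nat \<Rightarrow> 's) \<Rightarrow> real" where
  "prefix_weight init P f x b u =
     init (u 1) * (\<Prod>t\<in>{2..b}. P (u (t - 1)) (u t)) * (\<Prod>t\<in>{1..b}. f (u t) (x t))"

definition suffix_weight ::
    "('s \<Rightarrow> 's \<Rightarrow> real) \<Rightarrow> ('s \<Rightarrow> 'x \<Rightarrow> real) \<Rightarrow> nat \<Rightarrow> (nat \<Rightarrow> 'x) \<Rightarrow> nat \<Rightarrow> (nat \<Rightarrow> 's) \<Rightarrow> real" where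
  "suffix_weight P f T x b u = (\<Prod>t\<in>{Suc b..T}. P (u (t - 1)) (u t) * f (u t) (x t))"

definition splice :: "nat \<Rightarrow> (nat \<Rightarrow> 's) \<Rightarrow> (nat \<Rightarrow> 's) \<Rightarrow> nat \<Rightarrow> 's" where
  "splice b u v = (\<lambda>i. if i \<le> b then u i else v i)"

lemma path_weight_prefix_suffix:
  assumes "1 \<le> b" "b \<le> T"
  shows "path_weight init P f T x u = prefix_weight init P f x b u * suffix_weight P f T x b u"
proof -
  have "{2..T} = {2..b} \<union> {Suc b..T}" "{1..T} = {1..b} \<union> {Suc b..T}"
    using assms by auto
  then have "(\<Prod>t\<in>{2..T}. P (u (t - 1)) (u t))
               = (\<Prod>t\<in>{2..b}. P (u (t - 1)) (u t)) * (\<Prod>t\<in>{Suc b..T}. P (u (t - 1)) (u t))"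
    and "(\<Prod>t\<in>{1..T}. f (u t) (x t))
               = (\<Prod>t\<in>{1..b}. f (u t) (x t)) * (\<Prod>t\<in>{Suc b..T}. f (u t) (x t))"
    by (auto intro: prod.union_disjoint)
  then show ?thesis
    by (simp add: path_weight_def path_prob_def lik_def prefix_weight_def suffix_weight_def
        prod.distrib ac_simps)
qed

lemma prefix_weight_splice:
  assumes "1 \<le> b"
  shows "prefix_weight init P f x b (splice b u v) = prefix_weight init P f x b u"
  unfolding prefix_weight_def using assms by (auto simp: splice_def intro!: prod.cong)

lemma suffix_weight_splice:
  assumes "u b = v b"
  shows "suffix_weight P f T x b (splice b u v) = suffix_weight P f T x b v"
  unfolding suffix_weight_def
proof (rule prod.cong)
  fix t assume "t \<in> {Suc b..T}"
  then have "t - 1 \<le> b \<longleftrightarrow> t - 1 = b" "\<not> t \<le> b" by auto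
  then show "P (splice b u v (t - 1)) (splice b u v t) * f (splice b u v t) (x t)
           = P (v (t - 1)) (v t) * f (v t) (x t)"
    using assms by (auto simp: splice_def)
qed simp

lemma path_weight_splice:
  assumes "1 \<le> b" "b \<le> T" "u b = v b"
  shows "path_weight init P f T x (splice b u v) * path_weight init P f T x (splice b v u)
       = path_weight init P f T x u * path_weight init P f T x v"
  using assms
  by (simp add: path_weight_prefix_suffix prefix_weight_splice suffix_weight_splice ac_simps)

lemma splice_splice: "splice b (splice b u v) (splice b v u) = u"
  by (auto simp: splice_def)

lemma splice_in_paths: "u \<in> paths T \<Longrightarrow> v \<in> paths T \<Longrightarrow> splice b u v \<in> paths T"
  by (auto simp: paths_def splice_def PiE_iff extensional_def)

lemma finite_agree: "finite (agree T a b (s :: nat \<Rightarrow> 's::finite))"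
proof -
  have "finite (paths T :: (nat \<Rightarrow> 's) set)"
    unfolding paths_def by (rule finite_PiE) auto
  then show ?thesis unfolding agree_def by simp
qed

lemma agree_antimono: "a' \<le> a \<Longrightarrow> b \<le> b' \<Longrightarrow> agree T a' b' s \<subseteq> agree T a b s"
  by (auto simp: agree_def)

text \<open>Splicing at \<open>b\<close> is an involution exchanging the pairs of paths counted on the two sides.\<close>

lemma block_weight_exchange:
  fixes s :: "nat \<Rightarrow> 's::finite"
  assumes "1 \<le> a" "a \<le> c" "c \<le> b" "b \<le> d" "d \<le> T"
  shows "block_weight init P f T x s a b * block_weight init P f T x s c d
       = block_weight init P f T x s a d * block_weight init P f T x s c b"
proof -
  let ?W = "path_weight init P f T x"
  let ?A = "agree T a b s \<times> agree T c d s" and ?B = "agree T a d s \<times> agree T c b s"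
  let ?h = "\<lambda>(u, v). (splice b u v, splice b v u)"
  have bij: "bij_betw ?h ?A ?B"
  proof (rule bij_betw_byWitness[where f' = ?h])
    show "?h ` ?A \<subseteq> ?B" "?h ` ?B \<subseteq> ?A"
      using assms by (auto simp: agree_def splice_in_paths) (auto simp: splice_def)
  qed (auto simp: splice_splice)
  have "block_weight init P f T x s a b * block_weight init P f T x s c d
      = (\<Sum>(u, v)\<in>?A. ?W u * ?W v)"
    by (simp add: block_weight_def sum_product sum.cartesian_product)
  also have "\<dots> = (\<Sum>p\<in>?A. (\<lambda>(u, v). ?W u * ?W v) (?h p))"
  proof (rule sum.cong)
    fix p assume "p \<in> ?A"
    moreover obtain u v where "p = (u, v)" by force
    ultimately show "(case p of (u, v) \<Rightarrow> ?W u * ?W v) = (\<lambda>(u, v). ?W u * ?W v) (?h p)"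
      using assms path_weight_splice[of b T u v init P f x] by (auto simp: agree_def)
  qed simp
  also have "\<dots> = (\<Sum>(u, v)\<in>?B. ?W u * ?W v)"
    by (rule sum.reindex_bij_betw[OF bij])
  also have "\<dots> = block_weight init P f T x s a d * block_weight init P f T x s c b"
    by (simp add: block_weight_def sum_product sum.cartesian_product)
  finally show ?thesis .
qed

locale block_law =
  fixes T :: nat and q :: "nat \<Rightarrow> nat \<Rightarrow> real"
  assumes nonneg: "0 \<le> q a b"
    and antimono: "\<lbrakk>1 \<le> a'; a' \<le> a; a \<le> b; b \<le> b'; b' \<le> T\<rbrakk> \<Longrightarrow> q a' b' \<le> q a b"
    and exchange: "\<lbrakk>1 \<le> a; a \<le> c; c \<le> b; b \<le> d; d \<le> T\<rbrakk> \<Longrightarrow> q a b * q c d = q a d * q c b"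
begin

lemma zero_enlarge:
  "\<lbrakk>1 \<le> a'; a' \<le> a; a \<le> b; b \<le> b'; b' \<le> T; q a b = 0\<rbrakk> \<Longrightarrow> q a' b' = 0"
  using antimono[of a' a b b'] nonneg[of a' b'] by simp

lemma scale:
  assumes "0 < Z"
  shows "block_law T (\<lambda>a b. q a b / Z)"
  using assms nonneg antimono exchange
  by unfold_locales (auto simp: divide_right_mono)

lemma window_telescope:
  assumes "2 \<le> k" "k \<le> n" "n \<le> T"
  shows "q 1 k * (\<Prod>i\<in>{k+1..n}. q (i+1-k) i) * q (n+2-k) n = q 1 n * (\<Prod>i\<in>{k..n}. q (i+2-k) i)"
  using assms(2,3)
proof (induction n rule: dec_induct)
  case base
  then show ?case by simp
next
  case (step n)
  define X where "X = q 1 k * (\<Prod>i\<in>{k+1..n}. q (i+1-k) i)"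
  define Y where "Y = (\<Prod>i\<in>{k..n}. q (i+2-k) i)"
  define c where "c = n + 2 - k"
  have IH: "X * q c n = q 1 n * Y"
    using step unfolding X_def Y_def c_def by simp
  have L: "q 1 k * (\<Prod>i\<in>{k+1..Suc n}. q (i+1-k) i) * q (Suc n+2-k) (Suc n)
         = X * q c (Suc n) * q (c+1) (Suc n)"
    using step assms by (simp add: X_def c_def Suc_diff_le)
  have R: "q 1 (Suc n) * (\<Prod>i\<in>{k..Suc n}. q (i+2-k) i) = q 1 (Suc n) * Y * q (c+1) (Suc n)"
    using step assms by (simp add: Y_def c_def Suc_diff_le)
  have "X * q c (Suc n) = q 1 (Suc n) * Y"
  proof (cases "q c n = 0")
    case True
    have "Y = 0"
      unfolding Y_def by (rule prod_zero) (use True step in \<open>auto simp: c_def intro!: bexI[of _ n]\<close>)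
    moreover have "q c (Suc n) = 0"
      by (rule zero_enlarge[OF _ _ _ _ _ True]) (use step assms in \<open>auto simp: c_def\<close>)
    ultimately show ?thesis by simp
  next
    case False
    have "q 1 n * q c (Suc n) = q 1 (Suc n) * q c n"
      by (rule exchange) (use step assms in \<open>auto simp: c_def\<close>)
    then have "X * q c (Suc n) * q c n = q 1 (Suc n) * Y * q c n"
      using IH by (metis mult.commute mult.left_commute)
    then show ?thesis using False by simp
  qed
  then show ?case unfolding L R by simp
qed

end

definition window_product :: "nat \<Rightarrow> nat \<Rightarrow> (nat \<Rightarrow> nat \<Rightarrow> real) \<Rightarrow> real" where
  "window_product T k q =
     (\<Prod>j\<in>{1 - int k .. int T - 1}. q (nat (max (j + 1) 1)) (nat (min (j + int k) (int T))))"

lemma Rbar_window_product: "Rbar T k q = ereal (- 1 / real T) * eln (window_product T k q)"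
  unfolding Rbar_def window_product_def ..

text \<open>Windows indexed by their right end \<open>i = j + k\<close>: growing prefixes, full windows, shrinking suffixes.\<close>

lemma window_product_split:
  assumes "1 \<le> k" "k \<le> T"
  shows "window_product T k q =
    (\<Prod>i\<in>{1..k}. q 1 i) * (\<Prod>i\<in>{k+1..T}. q (i+1-k) i) * (\<Prod>i\<in>{T+1..T+k-1}. q (i+1-k) T)"
proof -
  define h where "h i = q (nat (max (int i - int k + 1) 1)) (nat (min (int i) (int T)))" for i
  have nat_shift: "k \<le> i \<Longrightarrow> nat (int i - int k + 1) = Suc i - k" for i by arith
  have pieces: "(\<Prod>i\<in>{1..k}. h i) = (\<Prod>i\<in>{1..k}. q 1 i)"
    "(\<Prod>i\<in>{k+1..T}. h i) = (\<Prod>i\<in>{k+1..T}. q (i+1-k) i)"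
    "(\<Prod>i\<in>{T+1..T+k-1}. h i) = (\<Prod>i\<in>{T+1..T+k-1}. q (i+1-k) T)"
    using assms by (auto intro!: prod.cong simp: h_def max_def min_def nat_shift)
  have "window_product T k q = (\<Prod>i\<in>{1..T+k-1}. h i)"
    unfolding window_product_def
    by (rule prod.reindex_bij_witness[where i = "\<lambda>i. int i - int k" and j = "\<lambda>j. nat (j + int k)"])
       (auto simp: h_def)
  also have "{1..T+k-1} = {1..k} \<union> {k+1..T} \<union> {T+1..T+k-1}"
    using assms by auto
  also have "(\<Prod>i\<in>{1..k} \<union> {k+1..T} \<union> {T+1..T+k-1}. h i)
           = (\<Prod>i\<in>{1..k}. h i) * (\<Prod>i\<in>{k+1..T}. h i) * (\<Prod>i\<in>{T+1..T+k-1}. h i)"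
    using assms by (subst prod.union_disjoint; auto simp: prod.union_disjoint)
  finally show ?thesis
    unfolding pieces .
qed

lemma ereal_times_eln_mult:
  assumes "0 \<le> x" "0 \<le> y"
  shows "ereal c * eln (x * y) = ereal c * eln x + ereal c * eln y"
  using assms by (cases "x = 0"; cases "y = 0") (auto simp: eln_def ln_mult algebra_simps)

context block_law
begin

lemma window_product_Suc:
  assumes "2 \<le> k" "k \<le> T"
  shows "window_product T k q = q 1 T * window_product T (k - 1) q"
proof -
  obtain m where m: "k = Suc m" "1 \<le> m"
    using assms by (cases k) auto
  let ?A = "\<Prod>i\<in>{1..m}. q 1 i" and ?B = "\<Prod>i\<in>{T+1..T+m-1}. q (i+1-m) T"
  have prefix: "(\<Prod>i\<in>{1..k}. q 1 i) = ?A * q 1 k"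
    using m by simp
  have middle: "(\<Prod>i\<in>{m+1..T}. q (i+1-m) i) = (\<Prod>i\<in>{k..T}. q (i+2-k) i)"
    using m by (intro prod.cong) auto
  have "(\<Prod>i\<in>{T+1..T+k-1}. q (i+1-k) T) = q (T+2-k) T * (\<Prod>i\<in>{Suc (T+1)..Suc (T+m-1)}. q (i+1-k) T)"
    using m by (subst prod.atLeast_Suc_atMost) (auto simp: Suc_diff_le)
  also have "(\<Prod>i\<in>{Suc (T+1)..Suc (T+m-1)}. q (i+1-k) T) = ?B"
    unfolding prod.shift_bounds_cl_Suc_ivl using m by simp
  finally have suffix: "(\<Prod>i\<in>{T+1..T+k-1}. q (i+1-k) T) = q (T+2-k) T * ?B" .
  have "window_product T k q = ?A * q 1 k * (\<Prod>i\<in>{k+1..T}. q (i+1-k) i) * (q (T+2-k) T * ?B)"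
    using assms by (simp only: window_product_split prefix suffix)
  also have "\<dots> = ?A * ?B * (q 1 k * (\<Prod>i\<in>{k+1..T}. q (i+1-k) i) * q (T+2-k) T)"
    by (simp only: mult_ac)
  also have "\<dots> = ?A * ?B * (q 1 T * (\<Prod>i\<in>{k..T}. q (i+2-k) i))"
    unfolding window_telescope[OF assms order_refl] ..
  also have "\<dots> = q 1 T * (?A * (\<Prod>i\<in>{m+1..T}. q (i+1-m) i) * ?B)"
    unfolding middle by (simp only: mult_ac)
  also have "?A * (\<Prod>i\<in>{m+1..T}. q (i+1-m) i) * ?B = window_product T (k - 1) q"
    by (subst window_product_split) (use m assms in auto)
  finally show ?thesis .
qed

lemma Rbar_Suc_window:
  assumes "2 \<le> k" "k \<le> T"
  shows "Rbar T k q = Rbar_inf T q + Rbar T (k - 1) q"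
proof -
  have "0 \<le> window_product T (k - 1) q"
    unfolding window_product_def by (simp add: nonneg prod_nonneg)
  then show ?thesis
    using assms nonneg
    by (simp add: Rbar_window_product Rbar_inf_def window_product_Suc ereal_times_eln_mult)
qed

end

lemma block_law_block_weight:
  fixes s :: "nat \<Rightarrow> 's::finite"
  assumes weight_nonneg: "\<And>u. u \<in> paths T \<Longrightarrow> 0 \<le> path_weight init P f T x u"
  shows "block_law T (block_weight init P f T x s)"
proof
  have nonneg_on_agree: "0 \<le> path_weight init P f T x u" if "u \<in> agree T a b s" for a b u
    using that weight_nonneg by (auto simp: agree_def)
  show "0 \<le> block_weight init P f T x s a b" for a b
    unfolding block_weight_def by (rule sum_nonneg) (rule nonneg_on_agree)
  show "block_weight init P f T x s a' b' \<le> block_weight init P f T x s a b"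
    if "a' \<le> a" "b \<le> b'" for a b a' b'
    unfolding block_weight_def
    by (rule sum_mono2[OF finite_agree agree_antimono[OF that]]) (auto intro: nonneg_on_agree)
qed (rule block_weight_exchange)

lemma prior_marg_eq_block_weight:
  "prior_marg init P T s = block_weight init P (\<lambda>_ _. 1) T x s"
  by (simp add: prior_marg_def block_weight_def path_weight_def lik_def fun_eq_iff)

lemma post_marg_eq_block_weight:
  "post_marg init P f T x s = (\<lambda>a b. block_weight init P f T x s a b / obs_density init P f T x)"
  by (simp add: post_marg_def block_weight_def path_weight_def fun_eq_iff)

theorem corollary5:
  fixes init :: "'s::finite \<Rightarrow> real" and P :: "'s \<Rightarrow> 's \<Rightarrow> real"
    and M :: "'x measure" and f :: "'s \<Rightarrow> 'x \<Rightarrow> real"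
    and T k :: nat and s :: "nat \<Rightarrow> 's"
  assumes init_nonneg: "\<forall>a. init a \<ge> 0" and init_sum: "(\<Sum>a\<in>UNIV. init a) = 1"
    and P_nonneg: "\<forall>a b. P a b \<ge> 0" and P_sum: "\<forall>a. (\<Sum>b\<in>UNIV. P a b) = 1"
    and f_meas: "\<forall>a. f a \<in> borel_measurable M"
    and f_nonneg: "\<forall>a. \<forall>y\<in>space M. f a y \<ge> 0"
    and f_dens: "\<forall>a. (\<integral>\<^sup>+ y. ennreal (f a y) \<partial>M) = 1"
    and T_pos: "T \<ge> 1" and k_le: "k \<le> T" and k_gt: "k > 1"
    and s_path: "s \<in> paths T"
  shows "Rbar T k (prior_marg init P T s)
           = Rbar_inf T (prior_marg init P T s) + Rbar T (k - 1) (prior_marg init P T s)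
         \<and> (\<forall>x. (\<forall>t\<in>{1..T}. x t \<in> space M) \<longrightarrow> obs_density init P f T x > 0 \<longrightarrow>
              Rbar T k (post_marg init P f T x s)
                = Rbar_inf T (post_marg init P f T x s) + Rbar T (k - 1) (post_marg init P f T x s))"
proof -
  have k: "2 \<le> k" "k \<le> T"
    using k_gt k_le by auto
  have path_prob_nonneg: "0 \<le> path_prob init P T u" for u
    unfolding path_prob_def using init_nonneg P_nonneg by (simp add: prod_nonneg)
  have "block_law T (block_weight init P (\<lambda>_ _. 1) T x s)" for x :: "nat \<Rightarrow> 'x"
    by (rule block_law_block_weight) (simp add: path_weight_def lik_def path_prob_nonneg)
  then have "block_law T (prior_marg init P T s)"
    by (subst prior_marg_eq_block_weight)
  moreover have "block_law T (post_marg init P f T x s)"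
    if obs: "\<forall>t\<in>{1..T}. x t \<in> space M" and pos: "obs_density init P f T x > 0" for x
  proof -
    have "0 \<le> path_weight init P f T x u" for u
      unfolding path_weight_def lik_def using obs f_nonneg path_prob_nonneg
      by (auto intro!: mult_nonneg_nonneg prod_nonneg)
    then show ?thesis
      unfolding post_marg_eq_block_weight using pos
      by (intro block_law.scale block_law_block_weight)
  qed
  ultimately show ?thesis
    using block_law.Rbar_Suc_window[OF _ k] by blast
qed

end
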